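(* Let $R$ be a ring and $T$ a left denominator set of $R$ with $\mathrm{ass}(T)=0$ such that $T^{-1}R=R_1\times\cdots\times R_n$ is a direct product of left localization maximal rings $R_1,\ldots,R_n$. Let $\tau:R\to T^{-1}R$, $r\mapsto\frac{r}{1}=(r_1,\ldots,r_n)$. For $i=1,\ldots,n$ put $S_i:=R_1\times\cdots\times R_i^*\times\cdots\times R_n$ (with $R_i^*$ the group of units of $R_i$ in the $i$-th place) and $T_i:=\tau^{-1}(S_i)$. Then $\max\mathrm{Den}_l(R)=\{T_1,\ldots,T_n\}$ and $T_i^{-1}R\cong R_i$ for each $i$.
   Context: All rings are associative with $1$. A multiplicative subset $S$ of $R$ ($1\in S$, $0\notin S$, closed under multiplication) is a left Ore set if $Sr\cap Rs\neq\emptyset$ for all $r\in R$, $s\in S$; for it, $\mathrm{ass}(S):=\{r\in R: sr=0\text{ for some } s\in S\}$. A left Ore set $S$ is a left denominator set if $rs=0$ ($r\in R$, $s\in S$) implies $tr=0$ for some $t\in S$. $\mathrm{Den}_l(R)$ is the set of left denominator sets, $S^{-1}R$ the left localization, $\max\mathrm{Den}_l(R)$ the set of maximal elements of $(\mathrm{Den}_l(R),\subseteq)$. For a ring $A$, $S_0(A)$ is the largest left Ore set of $A$ consisting of regular elements and $Q_l(A):=S_0(A)^{-1}A$. A ring $A$ is a left localization maximal ring if $A=Q_l(A)$ (i.e. $S_0(A)$ consists of units) and $\{\mathrm{ass}(S):S\in\mathrm{Den}_l(A)\}=\{0\}$. *)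

theory Defs
  imports "HOL-Algebra.Ring" "HOL-Algebra.RingHom"
begin

definition mult_subset :: "('a, 'm) ring_scheme \<Rightarrow> 'a set \<Rightarrow> bool" where
  "mult_subset R S \<longleftrightarrow> S \<subseteq> carrier R \<and> \<one>\<^bsub>R\<^esub> \<in> S \<and> \<zero>\<^bsub>R\<^esub> \<notin> S
     \<and> (\<forall>s\<in>S. \<forall>t\<in>S. s \<otimes>\<^bsub>R\<^esub> t \<in> S)"

definition left_ore :: "('a, 'm) ring_scheme \<Rightarrow> 'a set \<Rightarrow> bool" where
  "left_ore R S \<longleftrightarrow> mult_subset R S \<and>
     (\<forall>r\<in>carrier R. \<forall>s\<in>S. \<exists>s'\<in>S. \<exists>r'\<in>carrier R. s' \<otimes>\<^bsub>R\<^esub> r = r' \<otimes>\<^bsub>R\<^esub> s)"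

definition ass :: "('a, 'm) ring_scheme \<Rightarrow> 'a set \<Rightarrow> 'a set" where
  "ass R S = {r \<in> carrier R. \<exists>s\<in>S. s \<otimes>\<^bsub>R\<^esub> r = \<zero>\<^bsub>R\<^esub>}"

definition left_den :: "('a, 'm) ring_scheme \<Rightarrow> 'a set \<Rightarrow> bool" where
  "left_den R S \<longleftrightarrow> left_ore R S \<and>
     (\<forall>r\<in>carrier R. \<forall>s\<in>S. r \<otimes>\<^bsub>R\<^esub> s = \<zero>\<^bsub>R\<^esub> \<longrightarrow> (\<exists>t\<in>S. t \<otimes>\<^bsub>R\<^esub> r = \<zero>\<^bsub>R\<^esub>))"

definition Den_l :: "('a, 'm) ring_scheme \<Rightarrow> 'a set set" where
  "Den_l R = {S. left_den R S}"

definition maxDen_l :: "('a, 'm) ring_scheme \<Rightarrow> 'a set set" where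
  "maxDen_l R = {S \<in> Den_l R. \<forall>S'\<in>Den_l R. S \<subseteq> S' \<longrightarrow> S' = S}"

text \<open>\<open>is_left_loc R S Q \<sigma>\<close>: \<open>(Q, \<sigma>)\<close> is the left localization \<open>S\<^sup>-\<^sup>1R\<close> with
  canonical map \<open>\<sigma>(r) = r/1\<close> (characterization of the left ring of fractions:
  \<open>\<sigma>\<close> is a ring homomorphism inverting \<open>S\<close>, every element is \<open>\<sigma>(s)\<^sup>-\<^sup>1\<sigma>(r)\<close>,
  and \<open>ker \<sigma> = ass(S)\<close>).  Since this determines \<open>Q\<close> up to isomorphism,
  \<open>S\<^sup>-\<^sup>1R \<cong> A\<close> means \<open>\<exists>\<sigma>. is_left_loc R S A \<sigma>\<close>.\<close>
definition is_left_loc ::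
  "('a, 'm) ring_scheme \<Rightarrow> 'a set \<Rightarrow> ('b, 'n) ring_scheme \<Rightarrow> ('a \<Rightarrow> 'b) \<Rightarrow> bool" where
  "is_left_loc R S Q \<sigma> \<longleftrightarrow> ring Q \<and> \<sigma> \<in> ring_hom R Q \<and> \<sigma> ` S \<subseteq> Units Q \<and>
     (\<forall>q\<in>carrier Q. \<exists>s\<in>S. \<exists>r\<in>carrier R. q = inv\<^bsub>Q\<^esub> (\<sigma> s) \<otimes>\<^bsub>Q\<^esub> \<sigma> r) \<and>
     (\<forall>r\<in>carrier R. \<sigma> r = \<zero>\<^bsub>Q\<^esub> \<longleftrightarrow> r \<in> ass R S)"

definition regular_elems :: "('a, 'm) ring_scheme \<Rightarrow> 'a set" where
  "regular_elems A = {a \<in> carrier A. \<forall>b\<in>carrier A.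
      (a \<otimes>\<^bsub>A\<^esub> b = \<zero>\<^bsub>A\<^esub> \<longrightarrow> b = \<zero>\<^bsub>A\<^esub>) \<and> (b \<otimes>\<^bsub>A\<^esub> a = \<zero>\<^bsub>A\<^esub> \<longrightarrow> b = \<zero>\<^bsub>A\<^esub>)}"

definition S0 :: "('a, 'm) ring_scheme \<Rightarrow> 'a set" where
  "S0 A = (THE S. left_ore A S \<and> S \<subseteq> regular_elems A \<and>
     (\<forall>S'. left_ore A S' \<and> S' \<subseteq> regular_elems A \<longrightarrow> S' \<subseteq> S))"

definition left_loc_max_ring :: "('a, 'm) ring_scheme \<Rightarrow> bool" where
  "left_loc_max_ring A \<longleftrightarrow> ring A \<and> S0 A \<subseteq> Units A \<and>
     {ass A S | S. S \<in> Den_l A} = {{\<zero>\<^bsub>A\<^esub>}}"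

definition prod_ring :: "'i set \<Rightarrow> ('i \<Rightarrow> ('b, 'n) ring_scheme) \<Rightarrow> ('i \<Rightarrow> 'b) ring" where
  "prod_ring I Rs = \<lparr> carrier = (\<Pi>\<^sub>E i\<in>I. carrier (Rs i)),
     monoid.mult = (\<lambda>x y. \<lambda>i\<in>I. x i \<otimes>\<^bsub>Rs i\<^esub> y i),
     one = (\<lambda>i\<in>I. \<one>\<^bsub>Rs i\<^esub>),
     zero = (\<lambda>i\<in>I. \<zero>\<^bsub>Rs i\<^esub>),
     add = (\<lambda>x y. \<lambda>i\<in>I. x i \<oplus>\<^bsub>Rs i\<^esub> y i) \<rparr>"

end

theory Submission
  imports Defs
begin

text \<open>
  Every left denominator set \<open>S\<close> of \<open>R\<close> sits inside one containing \<open>T\<close>: since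
  \<open>ass(T) = 0\<close>, the monoid generated by \<open>S \<union> T\<close> is again a left denominator set.
  If \<open>T \<subseteq> S\<close>, some component \<open>i\<close> of \<open>\<tau>\<close> vanishes on no element of \<open>S\<close> (a product
  of elements vanishing in all components would be \<open>0\<close>), and because every element of
  \<open>R\<^sub>i\<close> is a left fraction with denominator in \<open>T\<close>, the image of \<open>S\<close> in \<open>R\<^sub>i\<close> is a
  left denominator set of \<open>R\<^sub>i\<close>. In a left localization maximal ring such sets consist of
  units, so \<open>S \<subseteq> T\<^sub>i\<close>. Conversely \<open>T\<^sub>i\<close>, the preimage of the units of \<open>R\<^sub>i\<close>, is a left
  denominator set with \<open>T\<^sub>i\<^sup>-\<^sup>1R = R\<^sub>i\<close>: the kernel of \<open>R \<rightarrow> R\<^sub>i\<close> is annihilated by lifts of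
  \<open>\<tau>(t) e\<^sub>i\<close> with \<open>t \<in> T\<close>. These lifts also show that the \<open>T\<^sub>i\<close> are pairwise incomparable,
  so they are exactly the maximal left denominator sets.
\<close>

context ring
begin

lemma minus_eq_zero_iff: "x \<in> carrier R \<Longrightarrow> y \<in> carrier R \<Longrightarrow> x \<ominus> y = \<zero> \<longleftrightarrow> x = y"
  by (metis a_minus_def add.inv_closed minus_equality r_neg)

lemma r_minus_distr: "c \<in> carrier R \<Longrightarrow> x \<in> carrier R \<Longrightarrow> y \<in> carrier R \<Longrightarrow>
    c \<otimes> (x \<ominus> y) = c \<otimes> x \<ominus> c \<otimes> y"
  by (simp add: minus_eq r_distr r_minus)

lemma Units_mult_eq_zero_iff:
  "u \<in> Units R \<Longrightarrow> x \<in> carrier R \<Longrightarrow> u \<otimes> x = \<zero> \<longleftrightarrow> x = \<zero>"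
  by (metis Units_closed Units_l_cancel r_null zero_closed)

lemma mult_Units_eq_zero_iff:
  assumes u: "u \<in> Units R" and x: "x \<in> carrier R"
  shows "x \<otimes> u = \<zero> \<longleftrightarrow> x = \<zero>"
proof
  assume "x \<otimes> u = \<zero>"
  then have "x \<otimes> u \<otimes> inv u = \<zero>" using u by simp
  then show "x = \<zero>" using u x by (simp add: m_assoc Units_closed)
qed (use u in \<open>simp add: Units_closed\<close>)

lemma regular_elems_mult_closed:
  assumes a: "a \<in> regular_elems R" and b: "b \<in> regular_elems R"
  shows "a \<otimes> b \<in> regular_elems R"
proof -
  have ac: "a \<in> carrier R" and al: "\<And>c. c \<in> carrier R \<Longrightarrow> a \<otimes> c = \<zero> \<Longrightarrow> c = \<zero>"
    and ar: "\<And>c. c \<in> carrier R \<Longrightarrow> c \<otimes> a = \<zero> \<Longrightarrow> c = \<zero>"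
    using a unfolding regular_elems_def by blast+
  have bc: "b \<in> carrier R" and bl: "\<And>c. c \<in> carrier R \<Longrightarrow> b \<otimes> c = \<zero> \<Longrightarrow> c = \<zero>"
    and br: "\<And>c. c \<in> carrier R \<Longrightarrow> c \<otimes> b = \<zero> \<Longrightarrow> c = \<zero>"
    using b unfolding regular_elems_def by blast+
  have "c = \<zero>" if "c \<in> carrier R" "a \<otimes> b \<otimes> c = \<zero>" for c
    using that ac bc al[of "b \<otimes> c"] bl[of c] by (simp add: m_assoc)
  moreover have "c = \<zero>" if "c \<in> carrier R" "c \<otimes> (a \<otimes> b) = \<zero>" for c
    using that ac bc ar[of c] br[of "c \<otimes> a"] by (simp flip: m_assoc)
  ultimately show ?thesis using ac bc unfolding regular_elems_def by blast
qed

end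

section \<open>Left denominator sets\<close>

lemma Den_lD:
  assumes "S \<in> Den_l R"
  shows "S \<subseteq> carrier R" "\<one>\<^bsub>R\<^esub> \<in> S" "\<zero>\<^bsub>R\<^esub> \<notin> S"
    "\<And>s t. s \<in> S \<Longrightarrow> t \<in> S \<Longrightarrow> s \<otimes>\<^bsub>R\<^esub> t \<in> S"
    "\<And>r s. r \<in> carrier R \<Longrightarrow> s \<in> S \<Longrightarrow> \<exists>s'\<in>S. \<exists>r'\<in>carrier R. s' \<otimes>\<^bsub>R\<^esub> r = r' \<otimes>\<^bsub>R\<^esub> s"
    "\<And>r s. r \<in> carrier R \<Longrightarrow> s \<in> S \<Longrightarrow> r \<otimes>\<^bsub>R\<^esub> s = \<zero>\<^bsub>R\<^esub> \<Longrightarrow> \<exists>t\<in>S. t \<otimes>\<^bsub>R\<^esub> r = \<zero>\<^bsub>R\<^esub>"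
  using assms unfolding Den_l_def left_den_def left_ore_def mult_subset_def by blast+

lemma Den_lI:
  assumes "S \<subseteq> carrier R" "\<one>\<^bsub>R\<^esub> \<in> S" "\<zero>\<^bsub>R\<^esub> \<notin> S"
    "\<And>s t. s \<in> S \<Longrightarrow> t \<in> S \<Longrightarrow> s \<otimes>\<^bsub>R\<^esub> t \<in> S"
    "\<And>r s. r \<in> carrier R \<Longrightarrow> s \<in> S \<Longrightarrow> \<exists>s'\<in>S. \<exists>r'\<in>carrier R. s' \<otimes>\<^bsub>R\<^esub> r = r' \<otimes>\<^bsub>R\<^esub> s"
    "\<And>r s. r \<in> carrier R \<Longrightarrow> s \<in> S \<Longrightarrow> r \<otimes>\<^bsub>R\<^esub> s = \<zero>\<^bsub>R\<^esub> \<Longrightarrow> \<exists>t\<in>S. t \<otimes>\<^bsub>R\<^esub> r = \<zero>\<^bsub>R\<^esub>"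
  shows "S \<in> Den_l R"
  using assms unfolding Den_l_def left_den_def left_ore_def mult_subset_def by blast

lemma maxDen_l_eq_image:
  assumes "F ` I \<subseteq> Den_l R"
    and "\<And>S. S \<in> Den_l R \<Longrightarrow> \<exists>i\<in>I. S \<subseteq> F i"
    and "\<And>i j. i \<in> I \<Longrightarrow> j \<in> I \<Longrightarrow> F i \<subseteq> F j \<Longrightarrow> i = j"
  shows "maxDen_l R = F ` I"
proof
  show "maxDen_l R \<subseteq> F ` I"
  proof
    fix S assume "S \<in> maxDen_l R"
    then have S: "S \<in> Den_l R" and max: "\<And>S'. S' \<in> Den_l R \<Longrightarrow> S \<subseteq> S' \<Longrightarrow> S' = S"
      unfolding maxDen_l_def by blast+
    obtain i where "i \<in> I" "S \<subseteq> F i" using assms(2)[OF S] by blast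
    then show "S \<in> F ` I" using max[of "F i"] assms(1) by blast
  qed
  show "F ` I \<subseteq> maxDen_l R"
  proof
    fix S assume "S \<in> F ` I"
    then obtain i where i: "i \<in> I" "S = F i" by blast
    have "S' = F i" if S': "S' \<in> Den_l R" and sub: "F i \<subseteq> S'" for S'
    proof -
      obtain j where "j \<in> I" "S' \<subseteq> F j" using assms(2)[OF S'] by blast
      then have "i = j" using assms(3) i(1) sub by blast
      then show ?thesis using \<open>S' \<subseteq> F j\<close> sub by blast
    qed
    then show "S \<in> maxDen_l R" unfolding maxDen_l_def using assms(1) i by blast
  qed
qed


lemma S0_eqI:
  assumes "left_ore R M" and "M \<subseteq> regular_elems R"
    and "\<And>D. left_ore R D \<Longrightarrow> D \<subseteq> regular_elems R \<Longrightarrow> D \<subseteq> M"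
  shows "S0 R = M"
  unfolding S0_def
proof (rule the_equality)
  show "left_ore R M \<and> M \<subseteq> regular_elems R \<and>
      (\<forall>D. left_ore R D \<and> D \<subseteq> regular_elems R \<longrightarrow> D \<subseteq> M)"
    using assms by blast
next
  fix S assume S: "left_ore R S \<and> S \<subseteq> regular_elems R \<and>
      (\<forall>D. left_ore R D \<and> D \<subseteq> regular_elems R \<longrightarrow> D \<subseteq> S)"
  show "S = M"
  proof (rule subset_antisym)
    show "S \<subseteq> M" using S assms(3) by blast
    show "M \<subseteq> S" using S assms(1,2) by blast
  qed
qed

section \<open>Multiplicatively closed subsets generated by a set\<close>

inductive_set mult_closure :: "('a, 'm) ring_scheme \<Rightarrow> 'a set \<Rightarrow> 'a set" for R G where
  one: "\<one>\<^bsub>R\<^esub> \<in> mult_closure R G"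
| mult: "g \<in> G \<Longrightarrow> x \<in> mult_closure R G \<Longrightarrow> g \<otimes>\<^bsub>R\<^esub> x \<in> mult_closure R G"

context ring
begin

lemma mult_closure_subset_carrier: "G \<subseteq> carrier R \<Longrightarrow> mult_closure R G \<subseteq> carrier R"
proof
  fix x assume G: "G \<subseteq> carrier R" and "x \<in> mult_closure R G"
  from this(2) show "x \<in> carrier R"
  proof induction
    case (mult g x)
    then show ?case using G by (intro m_closed) auto
  qed simp
qed

lemma generators_subset_mult_closure: "G \<subseteq> carrier R \<Longrightarrow> G \<subseteq> mult_closure R G"
proof
  fix g assume G: "G \<subseteq> carrier R" and g: "g \<in> G"
  then have "g \<otimes> \<one> \<in> mult_closure R G" by (intro mult_closure.mult mult_closure.one)
  then show "g \<in> mult_closure R G" using G g by (simp add: subsetD)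
qed

lemma mult_closure_mult_closed:
  assumes G: "G \<subseteq> carrier R" and "x \<in> mult_closure R G" and y: "y \<in> mult_closure R G"
  shows "x \<otimes> y \<in> mult_closure R G"
  using \<open>x \<in> mult_closure R G\<close>
proof induction
  case one
  then show ?case using y mult_closure_subset_carrier[OF G] by auto
next
  case (mult g x)
  then have "g \<otimes> x \<otimes> y = g \<otimes> (x \<otimes> y)"
    using G y mult_closure_subset_carrier[OF G] by (auto intro: m_assoc)
  then show ?case using mult by (simp add: mult_closure.mult)
qed

lemma left_ore_mult_closure:
  assumes G: "G \<subseteq> carrier R" and zero: "\<zero> \<notin> mult_closure R G"
    and ore: "\<And>g r. g \<in> G \<Longrightarrow> r \<in> carrier R \<Longrightarrow>
      \<exists>s\<in>mult_closure R G. \<exists>r'\<in>carrier R. s \<otimes> r = r' \<otimes> g"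
  shows "left_ore R (mult_closure R G)"
proof -
  let ?M = "mult_closure R G"
  note M_carrier = mult_closure_subset_carrier[OF G]
  have "\<exists>s\<in>?M. \<exists>r'\<in>carrier R. s \<otimes> r = r' \<otimes> p" if "p \<in> ?M" "r \<in> carrier R" for p r
    using that
  proof (induction arbitrary: r)
    case one
    then have "\<one> \<otimes> r = r \<otimes> \<one>" by simp
    then show ?case using one mult_closure.one by blast
  next
    case (mult g p)
    obtain s1 r1 where s1: "s1 \<in> ?M" "r1 \<in> carrier R" "s1 \<otimes> r = r1 \<otimes> p"
      using mult.IH mult.prems by blast
    obtain s2 r2 where s2: "s2 \<in> ?M" "r2 \<in> carrier R" "s2 \<otimes> r1 = r2 \<otimes> g"
      using ore mult.hyps(1) s1(2) by blast
    have carr: "s1 \<in> carrier R" "s2 \<in> carrier R" "p \<in> carrier R" "g \<in> carrier R"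
      using M_carrier G s1(1) s2(1) mult.hyps by auto
    have "(s2 \<otimes> s1) \<otimes> r = s2 \<otimes> (r1 \<otimes> p)"
      using carr mult.prems s1 by (simp add: m_assoc)
    also have "\<dots> = r2 \<otimes> (g \<otimes> p)"
      using carr s1(2) s2 by (simp flip: m_assoc)
    finally show ?case
      using mult_closure_mult_closed[OF G s2(1) s1(1)] s2(2) by blast
  qed
  then show ?thesis
    unfolding left_ore_def mult_subset_def
    using M_carrier zero mult_closure.one mult_closure_mult_closed[OF G] by blast
qed

lemma mult_closure_annihilated:
  assumes G: "G \<subseteq> carrier R"
    and W: "W \<subseteq> carrier R" "\<one> \<in> W" "\<And>a b. a \<in> W \<Longrightarrow> b \<in> W \<Longrightarrow> a \<otimes> b \<in> W"
    and ann: "\<And>g r. g \<in> G \<Longrightarrow> r \<in> carrier R \<Longrightarrow> r \<otimes> g = \<zero> \<Longrightarrow> \<exists>w\<in>W. w \<otimes> r = \<zero>"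
    and p: "p \<in> mult_closure R G"
  shows "r \<in> carrier R \<Longrightarrow> r \<otimes> p = \<zero> \<Longrightarrow> \<exists>w\<in>W. w \<otimes> r = \<zero>"
  using p
proof (induction arbitrary: r)
  case one
  then show ?case using W(2) by force
next
  case (mult g p)
  have carr: "p \<in> carrier R" "g \<in> carrier R"
    using mult_closure_subset_carrier[OF G] G mult.hyps by auto
  have "(r \<otimes> g) \<otimes> p = \<zero>" using mult.prems carr by (simp add: m_assoc)
  then obtain w1 where w1: "w1 \<in> W" "w1 \<otimes> (r \<otimes> g) = \<zero>"
    using mult.IH mult.prems(1) carr by blast
  then have "(w1 \<otimes> r) \<otimes> g = \<zero>" "w1 \<otimes> r \<in> carrier R"
    using W(1) carr mult.prems(1) by (auto simp: m_assoc)
  then obtain w2 where w2: "w2 \<in> W" "w2 \<otimes> (w1 \<otimes> r) = \<zero>"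
    using ann mult.hyps(1) by blast
  moreover have "w1 \<in> carrier R" "w2 \<in> carrier R" using W(1) w1(1) w2(1) by auto
  ultimately have "(w2 \<otimes> w1) \<otimes> r = \<zero>" using mult.prems(1) by (simp add: m_assoc)
  then show ?case using W(3) w1(1) w2(1) by blast
qed

lemma Den_l_mult_closure_Un:
  assumes S: "S \<in> Den_l R" and T: "T \<in> Den_l R" and ass_T: "ass R T = {\<zero>}"
  shows "mult_closure R (S \<union> T) \<in> Den_l R"
proof -
  let ?M = "mult_closure R (S \<union> T)"
  note SD = Den_lD[OF S] and TD = Den_lD[OF T]
  have G: "S \<union> T \<subseteq> carrier R" using SD(1) TD(1) by blast
  note gens = generators_subset_mult_closure[OF G]
  have ann: "\<exists>w\<in>S. w \<otimes> r = \<zero>" if "g \<in> S \<union> T" "r \<in> carrier R" "r \<otimes> g = \<zero>" for g r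
  proof (cases "g \<in> S")
    case True
    then show ?thesis using SD(6) that by blast
  next
    case False
    then have "r \<in> ass R T" using TD(6) that unfolding ass_def by blast
    then show ?thesis using ass_T SD(2) by force
  qed
  have M_ann: "\<exists>w\<in>S. w \<otimes> r = \<zero>" if "p \<in> ?M" "r \<in> carrier R" "r \<otimes> p = \<zero>" for p r
    by (rule mult_closure_annihilated[of "S \<union> T" S p r]) (use G SD(1,2,4) ann that in auto)
  have "\<zero> \<notin> ?M"
  proof
    assume "\<zero> \<in> ?M"
    then obtain w where "w \<in> S" "w \<otimes> \<one> = \<zero>" using M_ann[of \<zero> \<one>] by auto
    then show False using SD(1,3) by auto
  qed
  moreover have "\<exists>s\<in>?M. \<exists>r'\<in>carrier R. s \<otimes> r = r' \<otimes> g"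
    if "g \<in> S \<union> T" "r \<in> carrier R" for g r
    using that SD(5) TD(5) gens by blast
  ultimately have "left_ore R ?M" by (rule left_ore_mult_closure[OF G])
  moreover have "\<exists>t\<in>?M. t \<otimes> r = \<zero>" if "r \<in> carrier R" "p \<in> ?M" "r \<otimes> p = \<zero>" for r p
    using M_ann[OF that(2,1,3)] gens by blast
  ultimately show ?thesis unfolding Den_l_def left_den_def by blast
qed

lemma subset_S0:
  assumes D: "left_ore R D" "D \<subseteq> regular_elems R"
  shows "D \<subseteq> S0 R"
proof -
  define U where "U = \<Union>{D. left_ore R D \<and> D \<subseteq> regular_elems R}"
  let ?M = "mult_closure R U"
  have U_greatest: "D' \<subseteq> U" if "left_ore R D'" "D' \<subseteq> regular_elems R" for D'
    unfolding U_def using that by blast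
  have U_regular: "U \<subseteq> regular_elems R" unfolding U_def by blast
  then have U_carrier: "U \<subseteq> carrier R" unfolding regular_elems_def by blast
  have M_greatest: "D' \<subseteq> ?M" if "left_ore R D'" "D' \<subseteq> regular_elems R" for D'
    using U_greatest[OF that] generators_subset_mult_closure[OF U_carrier] by blast
  have M_regular: "?M \<subseteq> regular_elems R"
  proof
    fix x assume "x \<in> ?M"
    then show "x \<in> regular_elems R"
    proof induction
      case one
      show ?case unfolding regular_elems_def by simp
    next
      case (mult g x)
      then show ?case using U_regular regular_elems_mult_closed by blast
    qed
  qed
  have "\<one> \<noteq> \<zero>" using D(1) unfolding left_ore_def mult_subset_def by auto
  then have "\<zero> \<notin> regular_elems R"
    using r_null[OF one_closed] unfolding regular_elems_def by blast
  then have "\<zero> \<notin> ?M" using M_regular by blast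
  moreover have "\<exists>s\<in>?M. \<exists>r'\<in>carrier R. s \<otimes> r = r' \<otimes> g" if "g \<in> U" "r \<in> carrier R" for g r
  proof -
    obtain D' where D': "left_ore R D'" "D' \<subseteq> regular_elems R" "g \<in> D'"
      using \<open>g \<in> U\<close> unfolding U_def by blast
    then obtain s r' where "s \<in> D'" "r' \<in> carrier R" "s \<otimes> r = r' \<otimes> g"
      using \<open>r \<in> carrier R\<close> unfolding left_ore_def by blast
    then show ?thesis using M_greatest[OF D'(1,2)] by blast
  qed
  ultimately have M_ore: "left_ore R ?M" by (rule left_ore_mult_closure[OF U_carrier])
  have "S0 R = ?M" using M_ore M_regular M_greatest by (rule S0_eqI)
  then show ?thesis using M_greatest[OF D] by simp
qed

end

section \<open>Left localization maximal rings\<close>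

lemma left_loc_max_ring_one_neq_zero:
  assumes "left_loc_max_ring A"
  shows "\<one>\<^bsub>A\<^esub> \<noteq> \<zero>\<^bsub>A\<^esub>"
proof -
  have "{\<zero>\<^bsub>A\<^esub>} \<in> {ass A S | S. S \<in> Den_l A}"
    using assms unfolding left_loc_max_ring_def by (elim conjE) simp
  then obtain S where "S \<in> Den_l A" by blast
  then show ?thesis using Den_lD(2,3) by metis
qed

lemma left_loc_max_ring_Den_l_subset_Units:
  assumes A: "left_loc_max_ring A" and D: "D \<in> Den_l A"
  shows "D \<subseteq> Units A"
proof -
  interpret A: ring A using A unfolding left_loc_max_ring_def by blast
  have "ass A D \<in> {ass A S | S. S \<in> Den_l A}" using D by blast
  then have ass_D: "ass A D = {\<zero>\<^bsub>A\<^esub>}"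
    using A unfolding left_loc_max_ring_def by (elim conjE) simp
  have "D \<subseteq> regular_elems A"
  proof
    fix d assume d: "d \<in> D"
    have "c = \<zero>\<^bsub>A\<^esub>"
      if "c \<in> carrier A" "d \<otimes>\<^bsub>A\<^esub> c = \<zero>\<^bsub>A\<^esub> \<or> c \<otimes>\<^bsub>A\<^esub> d = \<zero>\<^bsub>A\<^esub>" for c
    proof -
      have "c \<in> ass A D" using that d Den_lD(6)[OF D] unfolding ass_def by blast
      then show ?thesis using ass_D by blast
    qed
    then show "d \<in> regular_elems A"
      using d Den_lD(1)[OF D] unfolding regular_elems_def by blast
  qed
  moreover have "left_ore A D" using D unfolding Den_l_def left_den_def by blast
  ultimately have "D \<subseteq> S0 A" using A.subset_S0 by blast
  also have "S0 A \<subseteq> Units A" using A unfolding left_loc_max_ring_def by (elim conjE)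
  finally show ?thesis .
qed

section \<open>Localizations described by a ring homomorphism\<close>

lemma is_left_loc_numerator:
  assumes loc: "is_left_loc R S A \<phi>" and q: "q \<in> carrier A"
  shows "\<exists>s\<in>S. \<exists>a\<in>carrier R. \<phi> s \<otimes>\<^bsub>A\<^esub> q = \<phi> a"
proof -
  interpret A: ring A using loc unfolding is_left_loc_def by blast
  obtain s a where s: "s \<in> S" and a: "a \<in> carrier R" and q_eq: "q = inv\<^bsub>A\<^esub> (\<phi> s) \<otimes>\<^bsub>A\<^esub> \<phi> a"
    using loc q unfolding is_left_loc_def by blast
  have u: "\<phi> s \<in> Units A" and "\<phi> a \<in> carrier A"
    using loc s a unfolding is_left_loc_def ring_hom_def by blast+
  then have "\<phi> s \<otimes>\<^bsub>A\<^esub> q = \<phi> a"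
    unfolding q_eq by (simp add: A.Units_closed A.Units_inv_closed flip: A.m_assoc)
  then show ?thesis using s a by blast
qed

context ring
begin

lemma Units_preimage_ore:
  assumes A: "ring A" and hom: "\<phi> \<in> ring_hom R A"
    and fraction: "\<And>q. q \<in> carrier A \<Longrightarrow>
      \<exists>s\<in>carrier R. \<exists>a\<in>carrier R. \<phi> s \<in> Units A \<and> \<phi> s \<otimes>\<^bsub>A\<^esub> q = \<phi> a"
    and kernel: "\<And>x. x \<in> carrier R \<Longrightarrow> \<phi> x = \<zero>\<^bsub>A\<^esub> \<Longrightarrow>
      \<exists>c\<in>carrier R. \<phi> c \<in> Units A \<and> c \<otimes> x = \<zero>"
    and r: "r \<in> carrier R" and s: "s \<in> carrier R" "\<phi> s \<in> Units A"
  shows "\<exists>s'\<in>carrier R. \<exists>r'\<in>carrier R. \<phi> s' \<in> Units A \<and> s' \<otimes> r = r' \<otimes> s"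
proof -
  interpret A: ring A by (rule A)
  interpret h: ring_hom_ring R A \<phi> using ring_hom_ringI2[OF ring_axioms A hom] .
  obtain t a where t: "t \<in> carrier R" "\<phi> t \<in> Units A" and a: "a \<in> carrier R"
    and ta: "\<phi> t \<otimes>\<^bsub>A\<^esub> (\<phi> r \<otimes>\<^bsub>A\<^esub> inv\<^bsub>A\<^esub> \<phi> s) = \<phi> a"
    using fraction[of "\<phi> r \<otimes>\<^bsub>A\<^esub> inv\<^bsub>A\<^esub> \<phi> s"] r s by auto
  have "\<phi> (t \<otimes> r) = \<phi> t \<otimes>\<^bsub>A\<^esub> ((\<phi> r \<otimes>\<^bsub>A\<^esub> inv\<^bsub>A\<^esub> \<phi> s) \<otimes>\<^bsub>A\<^esub> \<phi> s)"
    using r s t by (simp add: A.m_assoc)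
  also have "\<dots> = \<phi> (a \<otimes> s)"
    using r s t a by (subst A.m_assoc[symmetric]) (simp_all add: ta)
  finally have "\<phi> (t \<otimes> r) = \<phi> (a \<otimes> s)" .
  moreover have "\<phi> (t \<otimes> r \<ominus> a \<otimes> s) = \<phi> (t \<otimes> r) \<ominus>\<^bsub>A\<^esub> \<phi> (a \<otimes> s)"
    using r s t a by (simp add: a_minus_def del: h.hom_mult)
  ultimately have "\<phi> (t \<otimes> r \<ominus> a \<otimes> s) = \<zero>\<^bsub>A\<^esub>"
    using r s t a by (simp add: A.minus_eq_zero_iff del: h.hom_mult)
  then obtain c where c: "c \<in> carrier R" "\<phi> c \<in> Units A" "c \<otimes> (t \<otimes> r \<ominus> a \<otimes> s) = \<zero>"
    using kernel[of "t \<otimes> r \<ominus> a \<otimes> s"] r s t a by auto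
  then have "(c \<otimes> t) \<otimes> r = (c \<otimes> a) \<otimes> s"
    using r s t a by (simp add: r_minus_distr minus_eq_zero_iff m_assoc)
  moreover have "c \<otimes> t \<in> carrier R" "c \<otimes> a \<in> carrier R" "\<phi> (c \<otimes> t) \<in> Units A"
    using c t a by simp_all
  ultimately show ?thesis by blast
qed

lemma Units_preimage_left_loc:
  assumes A: "ring A" and nontrivial: "\<one>\<^bsub>A\<^esub> \<noteq> \<zero>\<^bsub>A\<^esub>" and hom: "\<phi> \<in> ring_hom R A"
    and fraction: "\<And>q. q \<in> carrier A \<Longrightarrow>
      \<exists>s\<in>carrier R. \<exists>a\<in>carrier R. \<phi> s \<in> Units A \<and> \<phi> s \<otimes>\<^bsub>A\<^esub> q = \<phi> a"
    and kernel: "\<And>x. x \<in> carrier R \<Longrightarrow> \<phi> x = \<zero>\<^bsub>A\<^esub> \<Longrightarrow>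
      \<exists>c\<in>carrier R. \<phi> c \<in> Units A \<and> c \<otimes> x = \<zero>"
  defines "U \<equiv> {r \<in> carrier R. \<phi> r \<in> Units A}"
  shows "U \<in> Den_l R" and "is_left_loc R U A \<phi>"
proof -
  interpret A: ring A by (rule A)
  interpret h: ring_hom_ring R A \<phi> using ring_hom_ringI2[OF ring_axioms A hom] .
  have kernel_ass: "\<phi> r = \<zero>\<^bsub>A\<^esub> \<longleftrightarrow> r \<in> ass R U" if r: "r \<in> carrier R" for r
  proof
    assume "\<phi> r = \<zero>\<^bsub>A\<^esub>"
    then show "r \<in> ass R U" using kernel[OF r] r unfolding U_def ass_def by blast
  next
    assume "r \<in> ass R U"
    then obtain s where "s \<in> U" "s \<otimes> r = \<zero>" unfolding ass_def by blast
    then have "\<phi> s \<otimes>\<^bsub>A\<^esub> \<phi> r = \<zero>\<^bsub>A\<^esub>" "\<phi> s \<in> Units A"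
      using r unfolding U_def by (auto simp flip: h.hom_mult)
    then show "\<phi> r = \<zero>\<^bsub>A\<^esub>" using r A.Units_mult_eq_zero_iff by simp
  qed
  have ore: "\<exists>s'\<in>U. \<exists>r'\<in>carrier R. s' \<otimes> r = r' \<otimes> s" if "r \<in> carrier R" "s \<in> U" for r s
    using Units_preimage_ore[OF A hom fraction kernel, of r s] that unfolding U_def by blast
  have den: "\<exists>c\<in>U. c \<otimes> r = \<zero>" if "r \<in> carrier R" "s \<in> U" "r \<otimes> s = \<zero>" for r s
  proof -
    have "\<phi> r \<otimes>\<^bsub>A\<^esub> \<phi> s = \<zero>\<^bsub>A\<^esub>" "\<phi> s \<in> Units A"
      using that unfolding U_def by (auto simp flip: h.hom_mult)
    then have "r \<in> ass R U" using that kernel_ass A.mult_Units_eq_zero_iff by simp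
    then show ?thesis unfolding ass_def by blast
  qed
  have "\<zero>\<^bsub>A\<^esub> \<notin> Units A" using nontrivial A.Units_mult_eq_zero_iff[of _ "\<one>\<^bsub>A\<^esub>"] by force
  then show U_Den: "U \<in> Den_l R"
    by (intro Den_lI ore den) (auto simp: U_def)
  show "is_left_loc R U A \<phi>"
    unfolding is_left_loc_def
  proof (intro conjI ballI)
    show "\<exists>s\<in>U. \<exists>r\<in>carrier R. q = inv\<^bsub>A\<^esub> (\<phi> s) \<otimes>\<^bsub>A\<^esub> \<phi> r" if q: "q \<in> carrier A" for q
    proof -
      obtain s a where "s \<in> carrier R" "\<phi> s \<in> Units A" "a \<in> carrier R" "\<phi> s \<otimes>\<^bsub>A\<^esub> q = \<phi> a"
        using fraction[OF q] by blast
      moreover then have "q = inv\<^bsub>A\<^esub> (\<phi> s) \<otimes>\<^bsub>A\<^esub> \<phi> a"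
        using q by (metis A.Units_inv_closed A.Units_l_inv A.Units_closed A.l_one A.m_assoc)
      ultimately show ?thesis unfolding U_def by blast
    qed
  qed (use A hom kernel_ass in \<open>auto simp: U_def\<close>)
qed

lemma image_left_den_condition:
  assumes A: "ring A" and hom: "\<phi> \<in> ring_hom R A" and S: "S \<in> Den_l R"
    and fraction: "\<And>q. q \<in> carrier A \<Longrightarrow> \<exists>s\<in>S. \<exists>a\<in>carrier R. \<phi> s \<otimes>\<^bsub>A\<^esub> q = \<phi> a"
    and kernel: "\<And>x. x \<in> carrier R \<Longrightarrow> \<phi> x = \<zero>\<^bsub>A\<^esub> \<Longrightarrow>
      \<exists>c\<in>carrier R. \<exists>s\<in>S. \<phi> c = \<phi> s \<and> c \<otimes> x = \<zero>"
    and q: "q \<in> carrier A" and s: "s \<in> S" and qs: "q \<otimes>\<^bsub>A\<^esub> \<phi> s = \<zero>\<^bsub>A\<^esub>"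
  shows "\<exists>u\<in>S. \<phi> u \<otimes>\<^bsub>A\<^esub> q = \<zero>\<^bsub>A\<^esub>"
proof -
  interpret A: ring A by (rule A)
  interpret h: ring_hom_ring R A \<phi> using ring_hom_ringI2[OF ring_axioms A hom] .
  note SD = Den_lD[OF S]
  have S_carrier: "s \<in> carrier R" if "s \<in> S" for s using SD(1) that by blast
  obtain t a where t: "t \<in> S" and a: "a \<in> carrier R" and ta: "\<phi> t \<otimes>\<^bsub>A\<^esub> q = \<phi> a"
    using fraction[OF q] by blast
  have s_carrier: "s \<in> carrier R" using S_carrier[OF s] .
  have "\<phi> (a \<otimes> s) = (\<phi> t \<otimes>\<^bsub>A\<^esub> q) \<otimes>\<^bsub>A\<^esub> \<phi> s"
    using a s_carrier by (simp add: ta)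
  also have "\<dots> = \<zero>\<^bsub>A\<^esub>"
    using q s_carrier S_carrier[OF t] by (simp add: A.m_assoc qs)
  finally obtain c t' where c: "c \<in> carrier R" "t' \<in> S" "\<phi> c = \<phi> t'" "c \<otimes> (a \<otimes> s) = \<zero>"
    using kernel[of "a \<otimes> s"] a s_carrier by auto
  then obtain s'' where s'': "s'' \<in> S" "s'' \<otimes> (c \<otimes> a) = \<zero>"
    using SD(6)[of "c \<otimes> a" s] a s s_carrier by (auto simp: m_assoc)
  have "\<phi> (s'' \<otimes> t' \<otimes> t) \<otimes>\<^bsub>A\<^esub> q = (\<phi> s'' \<otimes>\<^bsub>A\<^esub> \<phi> c) \<otimes>\<^bsub>A\<^esub> (\<phi> t \<otimes>\<^bsub>A\<^esub> q)"
    using s''(1) c t q S_carrier by (simp add: A.m_assoc)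
  also have "\<dots> = \<phi> (s'' \<otimes> (c \<otimes> a))"
    using s''(1) c(1) a S_carrier by (simp add: ta A.m_assoc)
  also have "\<dots> = \<zero>\<^bsub>A\<^esub>" using s''(2) by simp
  finally show ?thesis using SD(4) s''(1) c(2) t by blast
qed

lemma Den_l_image:
  assumes A: "ring A" and hom: "\<phi> \<in> ring_hom R A" and S: "S \<in> Den_l R"
    and zero: "\<zero>\<^bsub>A\<^esub> \<notin> \<phi> ` S"
    and fraction: "\<And>q. q \<in> carrier A \<Longrightarrow> \<exists>s\<in>S. \<exists>a\<in>carrier R. \<phi> s \<otimes>\<^bsub>A\<^esub> q = \<phi> a"
    and kernel: "\<And>x. x \<in> carrier R \<Longrightarrow> \<phi> x = \<zero>\<^bsub>A\<^esub> \<Longrightarrow>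
      \<exists>c\<in>carrier R. \<exists>s\<in>S. \<phi> c = \<phi> s \<and> c \<otimes> x = \<zero>"
  shows "\<phi> ` S \<in> Den_l A"
proof -
  interpret A: ring A by (rule A)
  interpret h: ring_hom_ring R A \<phi> using ring_hom_ringI2[OF ring_axioms A hom] .
  note SD = Den_lD[OF S]
  have S_carrier: "s \<in> carrier R" if "s \<in> S" for s using SD(1) that by blast
  have ore: "\<exists>d'\<in>\<phi> ` S. \<exists>q'\<in>carrier A. d' \<otimes>\<^bsub>A\<^esub> q = q' \<otimes>\<^bsub>A\<^esub> \<phi> s"
    if q: "q \<in> carrier A" and s: "s \<in> S" for q s
  proof -
    obtain t a where t: "t \<in> S" and a: "a \<in> carrier R" and ta: "\<phi> t \<otimes>\<^bsub>A\<^esub> q = \<phi> a"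
      using fraction[OF q] by blast
    obtain s' a' where s': "s' \<in> S" "a' \<in> carrier R" "s' \<otimes> a = a' \<otimes> s"
      using SD(5)[OF a s] by blast
    have "\<phi> (s' \<otimes> t) \<otimes>\<^bsub>A\<^esub> q = \<phi> s' \<otimes>\<^bsub>A\<^esub> (\<phi> t \<otimes>\<^bsub>A\<^esub> q)"
      using q S_carrier s'(1) t by (simp add: A.m_assoc)
    also have "\<dots> = \<phi> a' \<otimes>\<^bsub>A\<^esub> \<phi> s"
      using ta s' a s S_carrier by (simp flip: h.hom_mult)
    finally show ?thesis using SD(4)[OF s'(1) t] s'(2) by force
  qed
  have den: "\<exists>d'\<in>\<phi> ` S. d' \<otimes>\<^bsub>A\<^esub> q = \<zero>\<^bsub>A\<^esub>"
    if "q \<in> carrier A" "s \<in> S" "q \<otimes>\<^bsub>A\<^esub> \<phi> s = \<zero>\<^bsub>A\<^esub>" for q s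
    using image_left_den_condition[OF A hom S fraction kernel that] by blast
  show ?thesis
  proof (rule Den_lI)
    show "\<phi> ` S \<subseteq> carrier A" using S_carrier by auto
    show "\<one>\<^bsub>A\<^esub> \<in> \<phi> ` S" using SD(2) h.hom_one by force
    show "\<And>d e. d \<in> \<phi> ` S \<Longrightarrow> e \<in> \<phi> ` S \<Longrightarrow> d \<otimes>\<^bsub>A\<^esub> e \<in> \<phi> ` S"
      using SD(4) S_carrier by (force simp flip: h.hom_mult)
  qed (use zero ore den in blast)+
qed

end

section \<open>Localizations that are direct products\<close>

lemma prod_ring_simps [simp]:
  "carrier (prod_ring I Rs) = (\<Pi>\<^sub>E i\<in>I. carrier (Rs i))"
  "i \<in> I \<Longrightarrow> (x \<otimes>\<^bsub>prod_ring I Rs\<^esub> y) i = x i \<otimes>\<^bsub>Rs i\<^esub> y i"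
  "i \<in> I \<Longrightarrow> (x \<oplus>\<^bsub>prod_ring I Rs\<^esub> y) i = x i \<oplus>\<^bsub>Rs i\<^esub> y i"
  "i \<in> I \<Longrightarrow> \<one>\<^bsub>prod_ring I Rs\<^esub> i = \<one>\<^bsub>Rs i\<^esub>"
  "i \<in> I \<Longrightarrow> \<zero>\<^bsub>prod_ring I Rs\<^esub> i = \<zero>\<^bsub>Rs i\<^esub>"
  by (simp_all add: prod_ring_def)

lemma Units_prod_ring_component:
  assumes u: "u \<in> Units (prod_ring I Rs)" and i: "i \<in> I"
  shows "u i \<in> Units (Rs i)"
proof -
  obtain v where "v \<in> carrier (prod_ring I Rs)" "u \<in> carrier (prod_ring I Rs)"
    "v \<otimes>\<^bsub>prod_ring I Rs\<^esub> u = \<one>\<^bsub>prod_ring I Rs\<^esub>" "u \<otimes>\<^bsub>prod_ring I Rs\<^esub> v = \<one>\<^bsub>prod_ring I Rs\<^esub>"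
    using u unfolding Units_def by blast
  then have "v i \<in> carrier (Rs i)" "u i \<in> carrier (Rs i)"
    "v i \<otimes>\<^bsub>Rs i\<^esub> u i = \<one>\<^bsub>Rs i\<^esub>" "u i \<otimes>\<^bsub>Rs i\<^esub> v i = \<one>\<^bsub>Rs i\<^esub>"
    using i by (auto dest: fun_cong[of _ _ i])
  then show ?thesis unfolding Units_def by blast
qed

locale product_localization = ring R for R :: "('a, 'm) ring_scheme" (structure) +
  fixes T :: "'a set" and n :: nat
    and Rs :: "nat \<Rightarrow> ('b, 'k) ring_scheme" and \<tau> :: "'a \<Rightarrow> nat \<Rightarrow> 'b"
  assumes T_Den: "T \<in> Den_l R" and ass_T: "ass R T = {\<zero>}"
    and loc_max: "\<forall>i<n. left_loc_max_ring (Rs i)"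
    and loc: "is_left_loc R T (prod_ring {..<n} Rs) \<tau>"
begin

abbreviation Q where "Q \<equiv> prod_ring {..<n} Rs"

definition comp_units :: "nat \<Rightarrow> 'a set" where
  "comp_units i = {r \<in> carrier R. \<tau> r i \<in> Units (Rs i)}"

lemma Rs_loc_max: "i < n \<Longrightarrow> left_loc_max_ring (Rs i)"
  using loc_max by blast

lemma Rs_ring: "i < n \<Longrightarrow> ring (Rs i)"
  using Rs_loc_max unfolding left_loc_max_ring_def by blast

lemma Rs_zero_closed [simp]:
  assumes "i < n"
  shows "\<zero>\<^bsub>Rs i\<^esub> \<in> carrier (Rs i)"
proof -
  interpret ring "Rs i" using Rs_ring[OF assms] .
  show ?thesis by simp
qed

lemma Rs_null [simp]:
  assumes "i < n" and "x \<in> carrier (Rs i)"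
  shows "\<zero>\<^bsub>Rs i\<^esub> \<otimes>\<^bsub>Rs i\<^esub> x = \<zero>\<^bsub>Rs i\<^esub>" and "x \<otimes>\<^bsub>Rs i\<^esub> \<zero>\<^bsub>Rs i\<^esub> = \<zero>\<^bsub>Rs i\<^esub>"
proof -
  interpret ring "Rs i" using Rs_ring[OF assms(1)] .
  show "\<zero>\<^bsub>Rs i\<^esub> \<otimes>\<^bsub>Rs i\<^esub> x = \<zero>\<^bsub>Rs i\<^esub>" "x \<otimes>\<^bsub>Rs i\<^esub> \<zero>\<^bsub>Rs i\<^esub> = \<zero>\<^bsub>Rs i\<^esub>"
    using assms(2) by simp_all
qed

lemma tau_hom: "\<tau> \<in> ring_hom R Q"
  using loc unfolding is_left_loc_def by blast

lemma T_carrier: "T \<subseteq> carrier R"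
  using Den_lD(1)[OF T_Den] .

lemma tau_closed: "r \<in> carrier R \<Longrightarrow> \<tau> r \<in> carrier Q"
  using ring_hom_closed[OF tau_hom] .

lemma comp_closed [simp]: "r \<in> carrier R \<Longrightarrow> i < n \<Longrightarrow> \<tau> r i \<in> carrier (Rs i)"
  using tau_closed by fastforce

lemma comp_hom: "i < n \<Longrightarrow> (\<lambda>r. \<tau> r i) \<in> ring_hom R (Rs i)"
  using ring_hom_mult[OF tau_hom] ring_hom_add[OF tau_hom] ring_hom_one[OF tau_hom]
  by (intro ring_hom_memI) auto

lemma comp_mult [simp]: "i < n \<Longrightarrow> a \<in> carrier R \<Longrightarrow> b \<in> carrier R \<Longrightarrow>
    \<tau> (a \<otimes> b) i = \<tau> a i \<otimes>\<^bsub>Rs i\<^esub> \<tau> b i"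
  using ring_hom_mult[OF comp_hom] by blast

lemma comp_zero [simp]: "i < n \<Longrightarrow> \<tau> \<zero> i = \<zero>\<^bsub>Rs i\<^esub>"
  using ring_hom_zero[OF comp_hom ring_axioms Rs_ring] by blast

lemma comp_T_Units:
  assumes t: "t \<in> T" and i: "i < n"
  shows "\<tau> t i \<in> Units (Rs i)"
proof -
  have "\<tau> t \<in> Units Q" using loc t unfolding is_left_loc_def by blast
  then show ?thesis using Units_prod_ring_component[of "\<tau> t" "{..<n}" Rs i] i by simp
qed

lemma eq_zero_if_comps_zero:
  assumes a: "a \<in> carrier R" and z: "\<And>i. i < n \<Longrightarrow> \<tau> a i = \<zero>\<^bsub>Rs i\<^esub>"
  shows "a = \<zero>"
proof -
  have "\<tau> a = \<zero>\<^bsub>Q\<^esub>"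
  proof (rule PiE_ext)
    show "\<tau> a \<in> (\<Pi>\<^sub>E i\<in>{..<n}. carrier (Rs i))" using tau_closed[OF a] by simp
    show "\<zero>\<^bsub>Q\<^esub> \<in> (\<Pi>\<^sub>E i\<in>{..<n}. carrier (Rs i))" by (simp add: prod_ring_def)
  qed (simp add: z)
  then show ?thesis using loc a ass_T unfolding is_left_loc_def by blast
qed

lemma comp_fraction:
  assumes i: "i < n" and q: "q \<in> carrier (Rs i)"
  shows "\<exists>t\<in>T. \<exists>a\<in>carrier R. \<tau> t i \<otimes>\<^bsub>Rs i\<^esub> q = \<tau> a i \<and>
    (\<forall>j<n. j \<noteq> i \<longrightarrow> \<tau> a j = \<zero>\<^bsub>Rs j\<^esub>)"
proof -
  define x where "x = (\<lambda>j\<in>{..<n}. if j = i then q else \<zero>\<^bsub>Rs j\<^esub>)"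
  have "x \<in> carrier Q" unfolding x_def using q by auto
  then obtain t a where t: "t \<in> T" and a: "a \<in> carrier R" and ta: "\<tau> t \<otimes>\<^bsub>Q\<^esub> x = \<tau> a"
    using is_left_loc_numerator[OF loc] by blast
  have "\<tau> a j = \<tau> t j \<otimes>\<^bsub>Rs j\<^esub> x j" if "j < n" for j
    using that by (simp flip: ta)
  then have "\<tau> t i \<otimes>\<^bsub>Rs i\<^esub> q = \<tau> a i" "\<forall>j<n. j \<noteq> i \<longrightarrow> \<tau> a j = \<zero>\<^bsub>Rs j\<^esub>"
    using i t T_carrier unfolding x_def by auto
  then show ?thesis using t a by blast
qed

lemma comp_idempotent_lift:
  assumes i: "i < n"
  shows "\<exists>c\<in>carrier R. \<exists>t\<in>T. \<tau> c i = \<tau> t i \<and> (\<forall>j<n. j \<noteq> i \<longrightarrow> \<tau> c j = \<zero>\<^bsub>Rs j\<^esub>)"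
proof -
  interpret Ri: ring "Rs i" using Rs_ring[OF i] .
  obtain t a where t: "t \<in> T" and a: "a \<in> carrier R" and ta: "\<tau> t i \<otimes>\<^bsub>Rs i\<^esub> \<one>\<^bsub>Rs i\<^esub> = \<tau> a i"
    and a_other: "\<forall>j<n. j \<noteq> i \<longrightarrow> \<tau> a j = \<zero>\<^bsub>Rs j\<^esub>"
    using comp_fraction[OF i Ri.one_closed] by blast
  have "\<tau> a i = \<tau> t i" using ta t T_carrier i by (simp flip: ta add: subsetD)
  then show ?thesis using t a a_other by blast
qed

lemma comp_kernel:
  assumes i: "i < n" and x: "x \<in> carrier R" and z: "\<tau> x i = \<zero>\<^bsub>Rs i\<^esub>"
  shows "\<exists>c\<in>carrier R. \<exists>t\<in>T. \<tau> c i = \<tau> t i \<and> c \<otimes> x = \<zero>"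
proof -
  obtain c t where c: "c \<in> carrier R" "t \<in> T" "\<tau> c i = \<tau> t i"
    and c_other: "\<forall>j<n. j \<noteq> i \<longrightarrow> \<tau> c j = \<zero>\<^bsub>Rs j\<^esub>"
    using comp_idempotent_lift[OF i] by blast
  have "t \<in> carrier R" using c(2) T_carrier by blast
  then have "\<tau> (c \<otimes> x) j = \<zero>\<^bsub>Rs j\<^esub>" if "j < n" for j
    using c c_other x z that by (cases "j = i") auto
  then have "c \<otimes> x = \<zero>" using c(1) x by (intro eq_zero_if_comps_zero) auto
  then show ?thesis using c by blast
qed

lemma comp_units_left_loc:
  assumes i: "i < n"
  shows "comp_units i \<in> Den_l R" and "is_left_loc R (comp_units i) (Rs i) (\<lambda>r. \<tau> r i)"
proof -
  have fraction: "\<exists>s\<in>carrier R. \<exists>a\<in>carrier R. \<tau> s i \<in> Units (Rs i) \<and> \<tau> s i \<otimes>\<^bsub>Rs i\<^esub> q = \<tau> a i"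
    if "q \<in> carrier (Rs i)" for q
    using comp_fraction[OF i that] comp_T_Units[OF _ i] T_carrier by blast
  have kernel: "\<exists>c\<in>carrier R. \<tau> c i \<in> Units (Rs i) \<and> c \<otimes> x = \<zero>"
    if "x \<in> carrier R" "\<tau> x i = \<zero>\<^bsub>Rs i\<^esub>" for x
    using comp_kernel[OF i that] comp_T_Units[OF _ i] by metis
  note nontrivial = left_loc_max_ring_one_neq_zero[OF Rs_loc_max[OF i]]
  show "comp_units i \<in> Den_l R"
    unfolding comp_units_def
    by (rule Units_preimage_left_loc(1)[OF Rs_ring[OF i] nontrivial comp_hom[OF i]])
      (fact fraction, fact kernel)
  show "is_left_loc R (comp_units i) (Rs i) (\<lambda>r. \<tau> r i)"
    unfolding comp_units_def
    by (rule Units_preimage_left_loc(2)[OF Rs_ring[OF i] nontrivial comp_hom[OF i]])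
      (fact fraction, fact kernel)
qed

lemma comp_units_zero_comp:
  assumes i: "i < n" and j: "j < n" "j \<noteq> i"
  shows "\<exists>c\<in>comp_units i. \<tau> c j = \<zero>\<^bsub>Rs j\<^esub>"
proof -
  obtain c t where c: "c \<in> carrier R" "t \<in> T" "\<tau> c i = \<tau> t i"
    and c_other: "\<forall>j<n. j \<noteq> i \<longrightarrow> \<tau> c j = \<zero>\<^bsub>Rs j\<^esub>"
    using comp_idempotent_lift[OF i] by blast
  then have "c \<in> comp_units i" using comp_T_Units[OF c(2) i] unfolding comp_units_def by simp
  then show ?thesis using c_other j by blast
qed

lemma comp_units_subset_imp_eq:
  assumes i: "i < n" and j: "j < n" and sub: "comp_units i \<subseteq> comp_units j"
  shows "i = j"
proof (rule ccontr)
  assume "i \<noteq> j"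
  then obtain c where c: "c \<in> comp_units i" "\<tau> c j = \<zero>\<^bsub>Rs j\<^esub>"
    using comp_units_zero_comp[OF i j] by blast
  have "\<zero> \<notin> comp_units j" using Den_lD(3)[OF comp_units_left_loc(1)[OF j]] .
  then have "\<zero>\<^bsub>Rs j\<^esub> \<notin> Units (Rs j)" unfolding comp_units_def by (simp add: j)
  moreover have "\<tau> c j \<in> Units (Rs j)" using c(1) sub unfolding comp_units_def by blast
  ultimately show False using c(2) by simp
qed

lemma Den_l_exists_comp_nonzero:
  assumes S: "S \<in> Den_l R"
  shows "\<exists>i<n. \<forall>s\<in>S. \<tau> s i \<noteq> \<zero>\<^bsub>Rs i\<^esub>"
proof (rule ccontr)
  note SD = Den_lD[OF S]
  assume "\<not> ?thesis"
  then have vanish: "\<forall>i<n. \<exists>s\<in>S. \<tau> s i = \<zero>\<^bsub>Rs i\<^esub>" by blast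
  have "\<exists>p\<in>S. \<forall>i<k. \<tau> p i = \<zero>\<^bsub>Rs i\<^esub>" if "k \<le> n" for k
    using that
  proof (induction k)
    case 0
    then show ?case using SD(2) by blast
  next
    case (Suc k)
    then obtain p where p: "p \<in> S" "\<forall>i<k. \<tau> p i = \<zero>\<^bsub>Rs i\<^esub>" by auto
    have "k < n" using Suc.prems by simp
    then obtain s where s: "s \<in> S" "\<tau> s k = \<zero>\<^bsub>Rs k\<^esub>" using vanish by blast
    have "\<tau> (p \<otimes> s) i = \<zero>\<^bsub>Rs i\<^esub>" if "i < Suc k" for i
    proof -
      have i: "i < n" using that Suc.prems by simp
      have "\<tau> p i = \<zero>\<^bsub>Rs i\<^esub> \<or> \<tau> s i = \<zero>\<^bsub>Rs i\<^esub>"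
        using p(2) s(2) that less_Suc_eq by auto
      moreover have "p \<in> carrier R" "s \<in> carrier R" using p(1) s(1) SD(1) by auto
      ultimately show ?thesis using i by auto
    qed
    then show ?case using SD(4)[OF p(1) s(1)] by blast
  qed
  then obtain p where "p \<in> S" "\<forall>i<n. \<tau> p i = \<zero>\<^bsub>Rs i\<^esub>" by blast
  then have "p = \<zero>" using eq_zero_if_comps_zero SD(1) by blast
  then show False using \<open>p \<in> S\<close> SD(3) by blast
qed

lemma Den_l_superset_subset_comp_units:
  assumes S: "S \<in> Den_l R" and TS: "T \<subseteq> S"
  shows "\<exists>i<n. S \<subseteq> comp_units i"
proof -
  note SD = Den_lD[OF S]
  obtain i where i: "i < n" and nonzero: "\<forall>s\<in>S. \<tau> s i \<noteq> \<zero>\<^bsub>Rs i\<^esub>"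
    using Den_l_exists_comp_nonzero[OF S] by blast
  have "(\<lambda>s. \<tau> s i) ` S \<in> Den_l (Rs i)"
  proof (rule Den_l_image[OF Rs_ring[OF i] comp_hom[OF i] S])
    show "\<zero>\<^bsub>Rs i\<^esub> \<notin> (\<lambda>s. \<tau> s i) ` S" using nonzero by auto
    show "\<exists>s\<in>S. \<exists>a\<in>carrier R. \<tau> s i \<otimes>\<^bsub>Rs i\<^esub> q = \<tau> a i" if "q \<in> carrier (Rs i)" for q
      using comp_fraction[OF i that] TS by blast
    show "\<exists>c\<in>carrier R. \<exists>s\<in>S. \<tau> c i = \<tau> s i \<and> c \<otimes> x = \<zero>"
      if "x \<in> carrier R" "\<tau> x i = \<zero>\<^bsub>Rs i\<^esub>" for x
      using comp_kernel[OF i that] TS by blast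
  qed
  then have "(\<lambda>s. \<tau> s i) ` S \<subseteq> Units (Rs i)"
    using left_loc_max_ring_Den_l_subset_Units[OF Rs_loc_max[OF i]] by blast
  then have "S \<subseteq> comp_units i" using SD(1) unfolding comp_units_def by blast
  then show ?thesis using i by blast
qed

lemma Den_l_subset_comp_units:
  assumes S: "S \<in> Den_l R"
  shows "\<exists>i<n. S \<subseteq> comp_units i"
proof -
  have G: "S \<union> T \<subseteq> carrier R" using Den_lD(1)[OF S] T_carrier by blast
  obtain i where "i < n" "mult_closure R (S \<union> T) \<subseteq> comp_units i"
    using Den_l_superset_subset_comp_units[OF Den_l_mult_closure_Un[OF S T_Den ass_T]]
      generators_subset_mult_closure[OF G] by blast
  then show ?thesis using generators_subset_mult_closure[OF G] by blast
qed

lemma maxDen_l_eq_comp_units: "maxDen_l R = comp_units ` {..<n}"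
proof (rule maxDen_l_eq_image)
  show "comp_units ` {..<n} \<subseteq> Den_l R" using comp_units_left_loc(1) by blast
  show "\<exists>i\<in>{..<n}. S \<subseteq> comp_units i" if "S \<in> Den_l R" for S
    using Den_l_subset_comp_units[OF that] by auto
  show "i = j" if "i \<in> {..<n}" "j \<in> {..<n}" "comp_units i \<subseteq> comp_units j" for i j
    using comp_units_subset_imp_eq that by simp
qed

end

theorem theorem3p12:
  fixes R :: "('a, 'm) ring_scheme" and T :: "'a set" and n :: nat
    and Rs :: "nat \<Rightarrow> ('b, 'k) ring_scheme" and \<tau> :: "'a \<Rightarrow> nat \<Rightarrow> 'b"
  assumes "ring R"
    and "T \<in> Den_l R"
    and "ass R T = {\<zero>\<^bsub>R\<^esub>}"
    and "\<forall>i<n. left_loc_max_ring (Rs i)"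
    and "is_left_loc R T (prod_ring {..<n} Rs) \<tau>"
  shows "maxDen_l R =
           (\<lambda>i. {r \<in> carrier R. \<tau> r \<in> {x \<in> carrier (prod_ring {..<n} Rs). x i \<in> Units (Rs i)}})
             ` {..<n}
       \<and> (\<forall>i<n. \<exists>\<sigma>. is_left_loc R
              {r \<in> carrier R. \<tau> r \<in> {x \<in> carrier (prod_ring {..<n} Rs). x i \<in> Units (Rs i)}}
              (Rs i) \<sigma>)"
proof -
  interpret product_localization R T n Rs \<tau>
    using assms by (intro product_localization.intro product_localization_axioms.intro)
  have comp_units_eq: "{r \<in> carrier R. \<tau> r \<in> {x \<in> carrier Q. x i \<in> Units (Rs i)}} = comp_units i" for i
    using tau_closed unfolding comp_units_def by blast
  show ?thesis
    unfolding comp_units_eq using maxDen_l_eq_comp_units comp_units_left_loc(2) by blast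
qed

end
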